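(* Let $n$ be odd and let $p$ be an odd prime with $p\nmid n$, $p\equiv\delta\pmod 4$ with $\delta\in\{1,-1\}$, and put $t=(p-\delta)/4$. Let $m$ be an odd positive integer with $pm\equiv1\pmod n$, and let $a_1,\dots,a_t$ be nonnegative integers such that $pa_1,\dots,pa_t$ are congruent mod $n$ to $1,3,\dots,(p-3)/2$ respectively if $\delta=1$, and to $0,2,\dots,(p-3)/2$ respectively if $\delta=-1$. Let $$H(x)=\frac{x^m+1}{x+1}\left(x^{a_1}+\cdots+x^{a_t}\right),\quad f=\delta+(x^n+1)H(x),\quad g=(x^n+1)H(x).$$ Then $M_{Q_{4n}}(f+yg)=\delta p$.
   Context: $Q_{4n}=\langle x,y : x^{2n}=1,\ y^2=x^n,\ xy=yx^{-1}\rangle$. For $f,g\in\mathbb Z[x]$, $M_{Q_{4n}}(f+yg)=\prod_{z^{2n}=1}\big(f(z)f(z^{-1})-z^ng(z)g(z^{-1})\big)$, which is the integer group determinant of $Q_{4n}$ with entries given by the coefficients of $f,g$ reduced mod $x^{2n}-1$. *)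

theory Defs
  imports Complex_Main "HOL-Computational_Algebra.Polynomial" "HOL-Computational_Algebra.Primes" "HOL-Number_Theory.Cong"
begin

text \<open>Integer group determinant of Q_{4n} at the element f + y g, via the product formula:
  M(f + y g) = prod over z with z^(2n) = 1 of f(z) f(1/z) - z^n g(z) g(1/z).\<close>
definition evalc :: "int poly \<Rightarrow> complex \<Rightarrow> complex" where
  "evalc f z = poly (map_poly of_int f) z"

definition M_Q4n :: "nat \<Rightarrow> int poly \<Rightarrow> int poly \<Rightarrow> complex" where
  "M_Q4n n f g = (\<Prod>z\<in>{z::complex. z ^ (2*n) = 1}.
      evalc f z * evalc f (inverse z) - z ^ n * evalc g z * evalc g (inverse z))"

end

theory Submission
  imports Defs
begin

(* Write s = z^n for a 2n-th root of unity z. Since s^2 = 1, the factor of M at z collapses to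
   1 + \<delta> (s + 1) (H(z) + H(1/z)), which is 1 when s = -1; so M is the product of
   K(z) = 1 + 2 \<delta> (H(z) + H(1/z)) over the n-th roots of unity.  As p is invertible mod n,
   z = w^p runs through these roots together with w.  At z = w^p the factor (x^m + 1)/(x + 1)
   of H becomes (w + 1)/(w^p + 1) and the exponents p a_i become 2i - 1 resp. 2(i - 1); with
   their reflections p - 1 - (...) coming from H(1/z) they are exactly the exponents below p of
   one parity, whence K(w^p) (1 + w^p) = \<delta> (1 + w) (1 + w + ... + w^(p-1)).  In the product the
   factors 1 + w cancel (n is odd), \<delta>^n = \<delta>, and the geometric sums multiply to p because
   w \<mapsto> w^p permutes the nontrivial n-th roots of unity. *)

lemma evalc_add [simp]: "evalc (p + q) z = evalc p z + evalc q z"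
proof -
  have "map_poly of_int (p + q) = map_poly of_int p + (map_poly of_int q :: complex poly)"
    by (rule poly_eqI) (simp add: coeff_map_poly)
  then show ?thesis
    by (simp add: evalc_def)
qed

lemma evalc_mult [simp]: "evalc (p * q) z = evalc p z * evalc q z"
proof -
  have "map_poly of_int (p * q) = map_poly of_int p * (map_poly of_int q :: complex poly)"
    by (rule poly_eqI) (simp add: coeff_map_poly coeff_mult)
  then show ?thesis
    by (simp add: evalc_def)
qed

lemma evalc_pCons [simp]: "evalc (pCons a p) z = of_int a + z * evalc p z"
  by (simp add: evalc_def map_poly_pCons)

lemma evalc_monom [simp]: "evalc (monom a k) z = of_int a * z ^ k"
  by (simp add: evalc_def map_poly_monom poly_monom)

lemma evalc_0 [simp]: "evalc 0 z = 0"
  by (simp add: evalc_def)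

lemma evalc_1 [simp]: "evalc 1 z = 1"
  by (simp add: evalc_def)

lemma evalc_sum [simp]: "evalc (\<Sum>i\<in>I. p i) z = (\<Sum>i\<in>I. evalc (p i) z)"
  by (induction I rule: infinite_finite_induct) simp_all

lemma M_Q4n_collapse:
  fixes H :: "int poly" and \<delta> :: int
  assumes "n > 0" "\<delta> \<in> {1, -1}"
  shows "M_Q4n n ([:\<delta>:] + (monom 1 n + 1) * H) ((monom 1 n + 1) * H)
    = (\<Prod>z\<in>{z. z ^ n = 1}. 1 + 2 * of_int \<delta> * (evalc H z + evalc H (inverse z)))"
proof -
  define F where "F z = 1 + of_int \<delta> * (z ^ n + 1) * (evalc H z + evalc H (inverse z))" for z
  have \<delta>: "of_int \<delta> * of_int \<delta> = (1 :: complex)"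
    using assms(2) by auto
  have square: "z ^ (2 * n) = z ^ n * z ^ n" for z :: complex
    by (simp only: mult_2 power_add)
  have factor: "evalc ([:\<delta>:] + (monom 1 n + 1) * H) z * evalc ([:\<delta>:] + (monom 1 n + 1) * H) (inverse z)
      - z ^ n * evalc ((monom 1 n + 1) * H) z * evalc ((monom 1 n + 1) * H) (inverse z) = F z"
    if "z ^ (2 * n) = 1" for z :: complex
  proof -
    have "z ^ n * z ^ n = 1"
      using that by (simp only: square)
    moreover from this have "inverse z ^ n = z ^ n"
      by (metis inverse_unique power_inverse)
    \<comment> \<open>the terms in u v cancel since (s + 1)^2 (1 - s) = (s + 1) (1 - s^2) = 0\<close>
    moreover have "(d + (s + 1) * u) * (d + (s + 1) * v) - s * ((s + 1) * u) * ((s + 1) * v)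
        = 1 + d * (s + 1) * (u + v)" if "s * s = 1" "d * d = 1" for s d u v :: complex
      using that by algebra
    ultimately show ?thesis
      unfolding F_def using \<delta> by simp
  qed
  have F_trivial: "F z = 1" if "z ^ (2 * n) = 1" "z ^ n \<noteq> 1" for z :: complex
  proof -
    have "(z ^ n - 1) * (z ^ n + 1) = 0"
      using that(1) by (simp add: algebra_simps flip: square)
    with that(2) show ?thesis
      unfolding F_def by simp
  qed
  have "M_Q4n n ([:\<delta>:] + (monom 1 n + 1) * H) ((monom 1 n + 1) * H)
      = (\<Prod>z\<in>{z. z ^ (2 * n) = 1}. F z)"
    unfolding M_Q4n_def by (intro prod.cong refl factor) simp
  also have "\<dots> = (\<Prod>z\<in>{z. z ^ n = 1}. F z)"
    using F_trivial assms(1) by (intro prod.mono_neutral_right finite_roots_unity) (auto simp: square)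
  also have "\<dots> = (\<Prod>z\<in>{z. z ^ n = 1}. 1 + 2 * of_int \<delta> * (evalc H z + evalc H (inverse z)))"
    unfolding F_def by (intro prod.cong refl) simp
  finally show ?thesis .
qed

lemma root_unity_power_cong:
  fixes w :: "'a::monoid_mult"
  assumes "w ^ n = 1" "[a = b] (mod n)"
  shows "w ^ a = w ^ b"
proof -
  have "w ^ k = w ^ (k mod n)" for k
    by (metis assms(1) mult_1 power_add power_mult power_one mult_div_mod_eq)
  with assms(2) show ?thesis
    unfolding cong_def by metis
qed

lemma bij_betw_power_roots_unity:
  assumes "coprime p n"
  shows "bij_betw (\<lambda>w. w ^ p) {w :: 'a :: monoid_mult. w ^ n = 1} {w. w ^ n = 1}"
proof -
  obtain m where m: "[p * m = 1] (mod n)"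
    using cong_solve_coprime_nat[OF assms] by auto
  have inverse_power: "(w ^ p) ^ m = w" "(w ^ m) ^ p = w" if "w ^ n = 1" for w :: 'a
    using root_unity_power_cong[OF that m] by (simp_all add: power_mult[symmetric] mult.commute)
  have root_power: "(w ^ k) ^ n = 1" if "w ^ n = 1" for w :: 'a and k
    using that by (metis power_mult power_one mult.commute)
  show ?thesis
    by (rule bij_betw_byWitness[where f' = "\<lambda>w. w ^ m"]) (auto simp: inverse_power root_power)
qed

lemma prod_roots_unity_geometric_sum:
  assumes "n > 0" "coprime p n"
  shows "(\<Prod>w\<in>{w::complex. w ^ n = 1}. \<Sum>j<p. w ^ j) = of_nat p"
proof -
  define R where "R = {w::complex. w ^ n = 1}"
  have "finite R"
    unfolding R_def using assms(1) by (intro finite_roots_unity) simp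
  have "bij_betw (\<lambda>w. w ^ p) (R - {1}) (R - {1})"
    unfolding R_def by (intro bij_betw_DiffI bij_betw_power_roots_unity assms(2)) auto
  then have "(\<Prod>w\<in>R - {1}. w ^ p - 1) = (\<Prod>w\<in>R - {1}. w - 1)"
    using prod.reindex_bij_betw[of "\<lambda>w. w ^ p" "R - {1}" "R - {1}" "\<lambda>w. w - 1"] by simp
  then have "(\<Prod>w\<in>R - {1}. \<Sum>j<p. w ^ j) * (\<Prod>w\<in>R - {1}. w - 1) = (\<Prod>w\<in>R - {1}. w - 1)"
    by (simp add: power_diff_1_eq prod.distrib[symmetric] mult.commute)
  with \<open>finite R\<close> have "(\<Prod>w\<in>R - {1}. \<Sum>j<p. w ^ j) = 1"
    by simp
  moreover have "1 \<in> R"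
    unfolding R_def by simp
  ultimately show ?thesis
    using prod.remove[OF \<open>finite R\<close>, of 1 "\<lambda>w. \<Sum>j<p. w ^ j"] unfolding R_def by simp
qed

lemma prod_roots_unity_via_power_factor:
  fixes K :: "complex \<Rightarrow> complex"
  assumes "odd n" "coprime p n"
    and factor: "\<And>w. w ^ n = 1 \<Longrightarrow> K (w ^ p) * (1 + w ^ p) = c * (1 + w) * (\<Sum>j<p. w ^ j)"
  shows "(\<Prod>z\<in>{z. z ^ n = 1}. K z) = c ^ n * of_nat p"
proof -
  define R where "R = {w::complex. w ^ n = 1}"
  have "n > 0"
    using assms(1) by (simp add: odd_pos)
  then have "finite R" "card R = n"
    unfolding R_def by (auto intro: finite_roots_unity card_roots_unity_eq)
  have bij: "bij_betw (\<lambda>w. w ^ p) R R"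
    unfolding R_def by (rule bij_betw_power_roots_unity[OF assms(2)])
  have "1 + w \<noteq> 0" if "w \<in> R" for w
    using that assms(1) unfolding R_def by (auto simp: add_eq_0_iff)
  with \<open>finite R\<close> have nonzero: "(\<Prod>w\<in>R. 1 + w) \<noteq> 0"
    by simp
  have "(\<Prod>z\<in>R. K z) * (\<Prod>w\<in>R. 1 + w) = (\<Prod>w\<in>R. K (w ^ p) * (1 + w ^ p))"
    using prod.reindex_bij_betw[OF bij, of K] prod.reindex_bij_betw[OF bij, of "\<lambda>w. 1 + w"]
    by (simp add: prod.distrib)
  also have "\<dots> = (\<Prod>w\<in>R. c * (1 + w) * (\<Sum>j<p. w ^ j))"
    unfolding R_def by (intro prod.cong refl factor) simp
  also have "\<dots> = c ^ n * of_nat p * (\<Prod>w\<in>R. 1 + w)"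
    using prod_roots_unity_geometric_sum[OF \<open>n > 0\<close> assms(2)]
    by (simp add: prod.distrib \<open>card R = n\<close> flip: R_def)
  finally show ?thesis
    using nonzero unfolding R_def by simp
qed

lemma sum_lessThan_reflect_halves:
  fixes F :: "nat \<Rightarrow> 'a::comm_monoid_add"
  shows "(\<Sum>k<t. F k + F (2 * t - 1 - k)) = (\<Sum>k<2 * t. F k)"
proof -
  have "(\<Sum>k<t. F (2 * t - 1 - k)) = (\<Sum>k<t. F (t + (t - Suc k)))"
    by (intro sum.cong) (auto simp: mult_2)
  also have "\<dots> = (\<Sum>k<t. F (t + k))"
    by (rule sum.nat_diff_reindex)
  also have "\<dots> = (\<Sum>k\<in>{t..<2 * t}. F k)"
    using sum.shift_bounds_nat_ivl[of F 0 t t] by (simp add: atLeast0LessThan mult_2 add.commute)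
  finally show ?thesis
    by (simp add: sum.distrib atLeast0LessThan[symmetric] sum.atLeastLessThan_concat)
qed

lemma parity_geometric_sum_identity:
  fixes w \<delta> :: "'a::comm_ring_1"
  assumes p: "p + 1 = 4 * t + 2 * e" and "e \<le> 1" and \<delta>: "\<delta> = 2 * of_nat e - 1"
  shows "1 + w ^ p + 2 * \<delta> * (1 + w) *
           (\<Sum>i=1..t. w ^ (2 * (i - 1) + e) + w ^ (p - 1 - (2 * (i - 1) + e)))
         = \<delta> * (1 + w) * (\<Sum>j<p. w ^ j)"
proof -
  have "(\<Sum>i=1..t. w ^ (2 * (i - 1) + e) + w ^ (p - 1 - (2 * (i - 1) + e)))
      = (\<Sum>k<t. w ^ (2 * k + e) + w ^ (2 * (2 * t - 1 - k) + e))"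
    unfolding One_nat_def sum.atLeast1_atMost_eq using p
    by (intro sum.cong) (auto intro!: arg_cong[where f = "power w"])
  also have "\<dots> = (\<Sum>k<2 * t. w ^ (2 * k + e))"
    using sum_lessThan_reflect_halves[of "\<lambda>k. w ^ (2 * k + e)"] by simp
  finally have halves: "(\<Sum>i=1..t. w ^ (2 * (i - 1) + e) + w ^ (p - 1 - (2 * (i - 1) + e)))
      = w ^ e * (\<Sum>k<2 * t. w ^ (2 * k))"
    by (simp add: power_add sum_distrib_left mult.commute)
  have evens: "(1 + w) * (\<Sum>k<N. w ^ (2 * k)) = (\<Sum>j<2 * N. w ^ j)" for N
    by (induction N) (simp_all add: algebra_simps)
  have shift: "w * (\<Sum>j<N. w ^ j) = (\<Sum>j<N. w ^ j) + w ^ N - 1" for N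
    by (induction N) (simp_all add: algebra_simps)
  have "(1 + w) * (\<Sum>k<2 * t. w ^ (2 * k)) = (\<Sum>j<4 * t. w ^ j)"
    using evens[of "2 * t"] by simp
  then have lhs: "1 + w ^ p + 2 * \<delta> * (1 + w) *
           (\<Sum>i=1..t. w ^ (2 * (i - 1) + e) + w ^ (p - 1 - (2 * (i - 1) + e)))
       = 1 + w ^ p + 2 * \<delta> * w ^ e * (\<Sum>j<4 * t. w ^ j)"
    by (simp only: halves mult.assoc mult.left_commute[of "1 + w" "w ^ e"])
  show ?thesis
  proof (cases "e = 0")
    case True
    then have "4 * t = Suc p" "\<delta> = -1" using p \<delta> by simp_all
    then show ?thesis unfolding lhs by (simp add: True shift algebra_simps)
  next
    case False
    with \<open>e \<le> 1\<close> have "e = 1" by simp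
    with p \<delta> have "p = Suc (4 * t)" "e = 1" "\<delta> = 1" by simp_all
    then show ?thesis unfolding lhs using shift[of "4 * t"] by (simp add: algebra_simps)
  qed
qed

lemma evalc_quotient_by_x_plus_1:
  assumes "odd m"
  shows "evalc ((monom 1 m + 1) div [:1, 1:]) z * (1 + z) = z ^ m + 1"
proof -
  have "poly (monom 1 m + 1 :: int poly) (-1) = 0"
    using assms by (simp add: poly_monom)
  then have "[:- (-1), 1:] dvd (monom 1 m + 1 :: int poly)"
    by (simp only: poly_eq_0_iff_dvd)
  then have "(monom 1 m + 1) div [:1, 1:] * [:1, 1:] = (monom 1 m + 1 :: int poly)"
    by (intro dvd_div_mult_self) simp
  then have "evalc ((monom 1 m + 1) div [:1, 1:] * [:1, 1:]) z = evalc (monom 1 m + 1) z"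
    by (rule arg_cong)
  then show ?thesis
    by (simp add: algebra_simps)
qed

lemma evalc_power_substitution:
  fixes w :: complex
  assumes w: "w ^ n = 1" and "odd m" and m: "[p * m = 1] (mod n)"
    and a: "\<forall>i\<in>I. [p * a i = c i] (mod n)"
  shows "evalc ((monom 1 m + 1) div [:1, 1:] * (\<Sum>i\<in>I. monom 1 (a i))) (w ^ p) * (1 + w ^ p)
       = (1 + w) * (\<Sum>i\<in>I. w ^ c i)"
proof -
  have "(w ^ p) ^ m = w"
    using root_unity_power_cong[OF w m] by (simp add: power_mult[symmetric])
  moreover have "(\<Sum>i\<in>I. (w ^ p) ^ a i) = (\<Sum>i\<in>I. w ^ c i)"
    using a by (intro sum.cong refl) (simp add: power_mult[symmetric] root_unity_power_cong[OF w])
  ultimately show ?thesis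
    using evalc_quotient_by_x_plus_1[OF \<open>odd m\<close>, of "w ^ p"]
    by (simp add: mult.commute mult.left_commute add.commute)
qed

lemma collapsed_factor_at_power:
  fixes w :: complex and H :: "int poly"
  assumes "n > 0" and w: "w ^ n = 1" and m: "odd m" "[p * m = 1] (mod n)"
    and p: "p + 1 = 4 * t + 2 * e" "e \<le> 1"
    and a: "\<forall>i\<in>{1..t}. [p * a i = 2 * (i - 1) + e] (mod n)"
    and H: "H = (monom 1 m + 1) div [:1, 1:] * (\<Sum>i=1..t. monom 1 (a i))"
  shows "(1 + 2 * (2 * of_nat e - 1) * (evalc H (w ^ p) + evalc H (inverse (w ^ p)))) * (1 + w ^ p)
       = (2 * of_nat e - 1) * (1 + w) * (\<Sum>j<p. w ^ j)"
proof -
  define c where "c i = 2 * (i - 1) + e" for i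
  have "w \<noteq> 0"
    using w \<open>n > 0\<close> by (auto simp: power_0_left)
  have direct: "evalc H (w ^ p) * (1 + w ^ p) = (1 + w) * (\<Sum>i=1..t. w ^ c i)"
    unfolding H c_def by (rule evalc_power_substitution[OF w m a])
  have pointwise: "w ^ p * ((1 + inverse w) * inverse w ^ c i) = (1 + w) * w ^ (p - 1 - c i)"
    if "i \<in> {1..t}" for i
  proof -
    have "p = Suc (p - 1 - c i + c i)"
      using that p unfolding c_def by auto
    then have "w ^ p = w ^ (p - 1 - c i) * w ^ c i * w"
      by (metis power_add power_Suc2)
    then show ?thesis
      using \<open>w \<noteq> 0\<close> by (simp add: field_simps power_inverse)
  qed
  have "evalc H (inverse (w ^ p)) * (1 + w ^ p)
      = w ^ p * (evalc H (inverse w ^ p) * (1 + inverse w ^ p))"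
    using \<open>w \<noteq> 0\<close> by (simp add: power_inverse field_simps)
  also have "\<dots> = w ^ p * ((1 + inverse w) * (\<Sum>i=1..t. inverse w ^ c i))"
    unfolding H c_def using w by (subst evalc_power_substitution[OF _ m a]) (simp_all add: power_inverse)
  also have "\<dots> = (1 + w) * (\<Sum>i=1..t. w ^ (p - 1 - c i))"
    by (simp add: sum_distrib_left pointwise mult.assoc)
  finally have reflected: "evalc H (inverse (w ^ p)) * (1 + w ^ p)
      = (1 + w) * (\<Sum>i=1..t. w ^ (p - 1 - c i))" .
  have "(1 + 2 * (2 * of_nat e - 1) * (evalc H (w ^ p) + evalc H (inverse (w ^ p)))) * (1 + w ^ p)
      = 1 + w ^ p + 2 * (2 * of_nat e - 1) * (1 + w) * (\<Sum>i=1..t. w ^ c i + w ^ (p - 1 - c i))"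
    using direct reflected by (simp add: algebra_simps sum.distrib)
  also have "\<dots> = (2 * of_nat e - 1) * (1 + w) * (\<Sum>j<p. w ^ j)"
    unfolding c_def by (rule parity_geometric_sum_identity[OF p refl])
  finally show ?thesis .
qed

lemma exponents_parity_offset:
  fixes \<delta> :: int
  assumes "\<delta> \<in> {1, -1}" "[int p = \<delta>] (mod 4)" "int t = (int p - \<delta>) div 4"
    and "\<delta> = 1 \<Longrightarrow> \<forall>i\<in>{1..t}. [p * a i = 2 * i - 1] (mod n)"
    and "\<delta> = -1 \<Longrightarrow> \<forall>i\<in>{1..t}. [p * a i = 2 * (i - 1)] (mod n)"
  obtains e where "p + 1 = 4 * t + 2 * e" "e \<le> 1" "\<delta> = 2 * int e - 1"
    and "\<forall>i\<in>{1..t}. [p * a i = 2 * (i - 1) + e] (mod n)"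
proof -
  have p: "int p = 4 * int t + \<delta>"
    using assms(2,3) by (auto simp: cong_iff_dvd_diff)
  consider "\<delta> = 1" | "\<delta> = -1"
    using assms(1) by blast
  then show ?thesis
  proof cases
    case 1
    have "2 * (i - 1) + 1 = 2 * i - 1" if "i \<in> {1..t}" for i :: nat
      using that by auto
    then show ?thesis
      using 1 p assms(4) by (intro that[of 1]) auto
  next
    case 2
    then show ?thesis
      using p assms(5) by (intro that[of 0]) auto
  qed
qed

theorem lemma5p3:
  fixes n p m t :: nat and \<delta> :: int and a :: "nat \<Rightarrow> nat" and H f g :: "int poly"
  assumes "odd n"
    and "prime p" and "odd p" and "\<not> p dvd n"
    and "\<delta> \<in> {1, -1}" and "[int p = \<delta>] (mod 4)"
    and "int t = (int p - \<delta>) div 4"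
    and "odd m" and "m > 0" and "[p * m = 1] (mod n)"
    and "\<delta> = 1 \<Longrightarrow> \<forall>i\<in>{1..t}. [p * a i = 2 * i - 1] (mod n)"
    and "\<delta> = -1 \<Longrightarrow> \<forall>i\<in>{1..t}. [p * a i = 2 * (i - 1)] (mod n)"
    and "H = ((monom 1 m + 1) div [:1, 1:]) * (\<Sum>i=1..t. monom 1 (a i))"
    and "f = [:\<delta>:] + (monom 1 n + 1) * H"
    and "g = (monom 1 n + 1) * H"
  shows "M_Q4n n f g = of_int (\<delta> * int p)"
proof -
  have "n > 0"
    using \<open>odd n\<close> by (simp add: odd_pos)
  obtain e where e: "p + 1 = 4 * t + 2 * e" "e \<le> 1" "\<delta> = 2 * int e - 1"
    and a: "\<forall>i\<in>{1..t}. [p * a i = 2 * (i - 1) + e] (mod n)"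
    using exponents_parity_offset[OF assms(5,6,7,11,12)] .
  have factor: "(1 + 2 * of_int \<delta> * (evalc H (w ^ p) + evalc H (inverse (w ^ p)))) * (1 + w ^ p)
      = of_int \<delta> * (1 + w) * (\<Sum>j<p. w ^ j)" if "w ^ n = 1" for w
    using collapsed_factor_at_power[OF \<open>n > 0\<close> that \<open>odd m\<close> \<open>[p * m = 1] (mod n)\<close> e(1,2) a assms(13)]
    by (simp add: e(3))
  have "M_Q4n n f g = (\<Prod>z\<in>{z. z ^ n = 1}. 1 + 2 * of_int \<delta> * (evalc H z + evalc H (inverse z)))"
    unfolding assms(14,15) by (rule M_Q4n_collapse[OF \<open>n > 0\<close> \<open>\<delta> \<in> {1, -1}\<close>])
  also have "\<dots> = of_int \<delta> ^ n * of_nat p"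
    using \<open>odd n\<close> prime_imp_coprime[OF \<open>prime p\<close> \<open>\<not> p dvd n\<close>] factor
    by (rule prod_roots_unity_via_power_factor)
  also have "(of_int \<delta> :: complex) ^ n = of_int \<delta>"
    using \<open>odd n\<close> \<open>\<delta> \<in> {1, -1}\<close> by auto
  finally show ?thesis
    by simp
qed

end
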